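(* Let $F,G$ be complete posheaves on a locale $X$ and $\alpha:F\to G$ an order-preserving morphism. The following are equivalent: (1) $\alpha$ is sup-preserving, i.e. $sup_G\circ\alpha_*=\alpha\circ sup_F$ as morphisms $\mathbb{P}F\to G$. (2) For each $u\in\mathcal{O}(X)$, $\alpha_u:F(u)\to G(u)$ preserves arbitrary joins, and for all $v\le u$ in $\mathcal{O}(X)$ we have $\alpha_u\circ f_{v,u}=g_{v,u}\circ\alpha_v$, where $f_{v,u}:F(v)\to F(u)$ and $g_{v,u}:G(v)\to G(u)$ are the left adjoints of the restriction maps $F(u)\to F(v)$ and $G(u)\to G(v)$. (3) $\alpha$ has a right adjoint, i.e. there is an order-preserving $\beta:G\to F$ with $\alpha\dashv\beta$.
   Context: Let $X$ be a locale with frame of opens $\mathcal{O}(X)$. A posheaf on $X$ is a sheaf of sets $F$ with (POS1) each $F(u)$ a poset; (POS2) restriction maps $F(u)\to F(v)$, $x\mapsto x|_v$ ($v\le u$), order-preserving; (POS3) if $u=\bigvee_i u_i$ and $s,t\in F(u)$ satisfy $s|_{u_i}\le t|_{u_i}$ for all $i$, then $s\le t$. Points of $F$ are elements $x\in F(u)$ (for varying $u$), ordered by $x\le y$ ($x\in F(u)$, $y\in F(w)$) iff $u\le w$ and $x\le y|_u$. A morphism of posheaves is order-preserving if it preserves this order; $\alpha\dashv\beta$ means $\alpha x\le y\iff x\le\beta y$ for all points. A posheaf $F$ is complete iff every $F(u)$ is a complete lattice and every restriction map $F(u)\to F(v)$ ($v\le u$) is surjective and has both a left and a right adjoint (equivalently,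 the principal ideal embedding into the sheaf of downsheaves has a left adjoint). $\mathbb{P}F$ is the sheaf with $\mathbb{P}F(u)$ the set of subsheaves of $F^u$ (the restriction of $F$ to $\downarrow u$), ordered by inclusion, with restriction $S\mapsto S^v$. For complete $F$, $sup_F:\mathbb{P}F\to F$ sends $S\in\mathbb{P}F(u)$ to the least $z\in F(u)$ such that $S(v)\subseteq\{y\in F(v)\mid y\le z|_v\}$ for all $v\le u$ (this is the left adjoint of the principal ideal embedding $F\to\mathbb{P}F$). For $\alpha:F\to G$, $\alpha_*:\mathbb{P}F\to\mathbb{P}G$ sends $S\in\mathbb{P}F(u)$ to the subsheaf of $G^u$ generated by the presheaf $v\mapsto\alpha_v(S(v))$. *)

theory Defs
  imports Main
begin

text \<open>The locale X is given by its frame of opens, a complete lattice 'o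
satisfying the frame distributive law (assumed explicitly in the theorem).
A posheaf is represented by its sections over each open (subsets of a
fixed carrier type), restriction maps res u v (from F(u) to F(v), v \<le> u),
and the partial order on each F(u).\<close>

record ('o, 'a) posheaf =
  sec :: "'o \<Rightarrow> 'a set"
  res :: "'o \<Rightarrow> 'o \<Rightarrow> 'a \<Rightarrow> 'a"
  ord :: "'o \<Rightarrow> 'a \<Rightarrow> 'a \<Rightarrow> bool"

definition frame_law :: "'o::complete_lattice itself \<Rightarrow> bool" where
  "frame_law _ \<longleftrightarrow> (\<forall>(a::'o) S. inf a (Sup S) = (SUP b\<in>S. inf a b))"

definition is_sheaf :: "('o::complete_lattice, 'a, 'c) posheaf_scheme \<Rightarrow> bool" where
  "is_sheaf F \<longleftrightarrow>
     (\<forall>u v x. v \<le> u \<longrightarrow> x \<in> sec F u \<longrightarrow> res F u v x \<in> sec F v) \<and>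
     (\<forall>u x. x \<in> sec F u \<longrightarrow> res F u u x = x) \<and>
     (\<forall>u v w x. w \<le> v \<longrightarrow> v \<le> u \<longrightarrow> x \<in> sec F u \<longrightarrow>
        res F v w (res F u v x) = res F u w x) \<and>
     (\<forall>U x y. x \<in> sec F (Sup U) \<longrightarrow> y \<in> sec F (Sup U) \<longrightarrow>
        (\<forall>w\<in>U. res F (Sup U) w x = res F (Sup U) w y) \<longrightarrow> x = y) \<and>
     (\<forall>U s. (\<forall>w\<in>U. s w \<in> sec F w) \<longrightarrow>
        (\<forall>w\<in>U. \<forall>w'\<in>U. res F w (inf w w') (s w) = res F w' (inf w w') (s w')) \<longrightarrow>
        (\<exists>x\<in>sec F (Sup U). \<forall>w\<in>U. res F (Sup U) w x = s w))"

definition is_posheaf :: "('o::complete_lattice, 'a, 'c) posheaf_scheme \<Rightarrow> bool" where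
  "is_posheaf F \<longleftrightarrow> is_sheaf F \<and>
     \<comment> \<open>POS1\<close>
     (\<forall>u. (\<forall>x\<in>sec F u. ord F u x x) \<and>
          (\<forall>x\<in>sec F u. \<forall>y\<in>sec F u. ord F u x y \<longrightarrow> ord F u y x \<longrightarrow> x = y) \<and>
          (\<forall>x\<in>sec F u. \<forall>y\<in>sec F u. \<forall>z\<in>sec F u. ord F u x y \<longrightarrow> ord F u y z \<longrightarrow> ord F u x z)) \<and>
     \<comment> \<open>POS2\<close>
     (\<forall>u v x y. v \<le> u \<longrightarrow> x \<in> sec F u \<longrightarrow> y \<in> sec F u \<longrightarrow> ord F u x y \<longrightarrow>
        ord F v (res F u v x) (res F u v y)) \<and>
     \<comment> \<open>POS3\<close>
     (\<forall>U s t. s \<in> sec F (Sup U) \<longrightarrow> t \<in> sec F (Sup U) \<longrightarrow>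
        (\<forall>w\<in>U. ord F w (res F (Sup U) w s) (res F (Sup U) w t)) \<longrightarrow> ord F (Sup U) s t)"

definition is_lub :: "('o, 'a, 'c) posheaf_scheme \<Rightarrow> 'o \<Rightarrow> 'a set \<Rightarrow> 'a \<Rightarrow> bool" where
  "is_lub F u A z \<longleftrightarrow> z \<in> sec F u \<and> (\<forall>a\<in>A. ord F u a z) \<and>
     (\<forall>z'\<in>sec F u. (\<forall>a\<in>A. ord F u a z') \<longrightarrow> ord F u z z')"

definition is_left_adj_res :: "('o, 'a, 'c) posheaf_scheme \<Rightarrow> 'o \<Rightarrow> 'o \<Rightarrow> ('a \<Rightarrow> 'a) \<Rightarrow> bool" where
  "is_left_adj_res F u v f \<longleftrightarrow> (\<forall>y\<in>sec F v. f y \<in> sec F u) \<and>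
     (\<forall>y\<in>sec F v. \<forall>x\<in>sec F u. ord F u (f y) x \<longleftrightarrow> ord F v y (res F u v x))"

definition is_right_adj_res :: "('o, 'a, 'c) posheaf_scheme \<Rightarrow> 'o \<Rightarrow> 'o \<Rightarrow> ('a \<Rightarrow> 'a) \<Rightarrow> bool" where
  "is_right_adj_res F u v g \<longleftrightarrow> (\<forall>y\<in>sec F v. g y \<in> sec F u) \<and>
     (\<forall>y\<in>sec F v. \<forall>x\<in>sec F u. ord F v (res F u v x) y \<longleftrightarrow> ord F u x (g y))"

definition complete_posheaf :: "('o::complete_lattice, 'a, 'c) posheaf_scheme \<Rightarrow> bool" where
  "complete_posheaf F \<longleftrightarrow> is_posheaf F \<and>
     (\<forall>u A. A \<subseteq> sec F u \<longrightarrow> (\<exists>z. is_lub F u A z)) \<and>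
     (\<forall>u v. v \<le> u \<longrightarrow>
        res F u v ` sec F u = sec F v \<and>
        (\<exists>f. is_left_adj_res F u v f) \<and> (\<exists>g. is_right_adj_res F u v g))"

definition res_ladj :: "('o, 'a, 'c) posheaf_scheme \<Rightarrow> 'o \<Rightarrow> 'o \<Rightarrow> 'a \<Rightarrow> 'a" where
  "res_ladj F v u y = (THE x. x \<in> sec F u \<and>
      (\<forall>x'\<in>sec F u. ord F u x x' \<longleftrightarrow> ord F v y (res F u v x')))"

definition is_morphism :: "('o::complete_lattice, 'a, 'c) posheaf_scheme \<Rightarrow> ('o, 'b, 'd) posheaf_scheme
    \<Rightarrow> ('o \<Rightarrow> 'a \<Rightarrow> 'b) \<Rightarrow> bool" where
  "is_morphism F G \<alpha> \<longleftrightarrow> (\<forall>u x. x \<in> sec F u \<longrightarrow> \<alpha> u x \<in> sec G u) \<and>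
     (\<forall>u v x. v \<le> u \<longrightarrow> x \<in> sec F u \<longrightarrow> \<alpha> v (res F u v x) = res G u v (\<alpha> u x))"

definition pt_le :: "('o::complete_lattice, 'a, 'c) posheaf_scheme \<Rightarrow> 'o \<Rightarrow> 'a \<Rightarrow> 'o \<Rightarrow> 'a \<Rightarrow> bool" where
  "pt_le F u x w y \<longleftrightarrow> u \<le> w \<and> ord F u x (res F w u y)"

definition order_preserving :: "('o::complete_lattice, 'a, 'c) posheaf_scheme \<Rightarrow> ('o, 'b, 'd) posheaf_scheme
    \<Rightarrow> ('o \<Rightarrow> 'a \<Rightarrow> 'b) \<Rightarrow> bool" where
  "order_preserving F G \<alpha> \<longleftrightarrow> (\<forall>u w x y. x \<in> sec F u \<longrightarrow> y \<in> sec F w \<longrightarrow>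
      pt_le F u x w y \<longrightarrow> pt_le G u (\<alpha> u x) w (\<alpha> w y))"

definition adjoint :: "('o::complete_lattice, 'a, 'c) posheaf_scheme \<Rightarrow> ('o, 'b, 'd) posheaf_scheme
    \<Rightarrow> ('o \<Rightarrow> 'a \<Rightarrow> 'b) \<Rightarrow> ('o \<Rightarrow> 'b \<Rightarrow> 'a) \<Rightarrow> bool" where
  "adjoint F G \<alpha> \<beta> \<longleftrightarrow> (\<forall>u w x y. x \<in> sec F u \<longrightarrow> y \<in> sec G w \<longrightarrow>
      (pt_le G u (\<alpha> u x) w y \<longleftrightarrow> pt_le F u x w (\<beta> w y)))"

text \<open>Subsheaves of F^u (F restricted to the down-set of u); the value on opens
not below u is empty by convention. These are the elements of \<bbbP>F(u).\<close>
definition is_subsheaf :: "('o::complete_lattice, 'a, 'c) posheaf_scheme \<Rightarrow> 'o \<Rightarrow> ('o \<Rightarrow> 'a set) \<Rightarrow> bool" where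
  "is_subsheaf F u T \<longleftrightarrow>
     (\<forall>v. \<not> v \<le> u \<longrightarrow> T v = {}) \<and>
     (\<forall>v. v \<le> u \<longrightarrow> T v \<subseteq> sec F v) \<and>
     (\<forall>v w x. v \<le> u \<longrightarrow> w \<le> v \<longrightarrow> x \<in> T v \<longrightarrow> res F v w x \<in> T w) \<and>
     (\<forall>V x. Sup V \<le> u \<longrightarrow> x \<in> sec F (Sup V) \<longrightarrow>
        (\<forall>w\<in>V. res F (Sup V) w x \<in> T w) \<longrightarrow> x \<in> T (Sup V))"

definition psup :: "('o::complete_lattice, 'a, 'c) posheaf_scheme \<Rightarrow> 'o \<Rightarrow> ('o \<Rightarrow> 'a set) \<Rightarrow> 'a" where
  "psup F u S = (THE z. z \<in> sec F u \<and>
      (\<forall>v. v \<le> u \<longrightarrow> (\<forall>y\<in>S v. ord F v y (res F u v z))) \<and>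
      (\<forall>z'\<in>sec F u. (\<forall>v. v \<le> u \<longrightarrow> (\<forall>y\<in>S v. ord F v y (res F u v z'))) \<longrightarrow> ord F u z z'))"

definition gen_subsheaf :: "('o::complete_lattice, 'b, 'd) posheaf_scheme \<Rightarrow> 'o \<Rightarrow> ('o \<Rightarrow> 'b set) \<Rightarrow> ('o \<Rightarrow> 'b set)" where
  "gen_subsheaf G u P = (\<lambda>v. \<Inter>{T v | T. is_subsheaf G u T \<and> (\<forall>w. P w \<subseteq> T w)})"

definition push :: "('o::complete_lattice, 'b, 'd) posheaf_scheme \<Rightarrow> ('o \<Rightarrow> 'a \<Rightarrow> 'b) \<Rightarrow> 'o \<Rightarrow> ('o \<Rightarrow> 'a set) \<Rightarrow> ('o \<Rightarrow> 'b set)" where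
  "push G \<alpha> u S = gen_subsheaf G u (\<lambda>v. \<alpha> v ` S v)"

end

theory Submission
  imports Defs
begin

text \<open>The join \<open>sup\<^sub>F S\<close> in \<open>F(u)\<close> is the fibrewise join of the sections \<open>f\<^bsub>v,u\<^esub> y\<close> with
\<open>y \<in> S(v)\<close>, and the generated subsheaf and the pushforward \<open>\<alpha>\<^sub>*\<close> have the same upper bounds as
their generators. Applied to a set of sections placed at a single open, sup-preservation
therefore says that each \<open>\<alpha>\<^sub>u\<close> preserves joins and that \<open>\<alpha>\<close> commutes with the left adjoints
\<open>f\<^bsub>v,u\<^esub>\<close>. Fibrewise join preservation gives fibrewise right adjoints
\<open>\<beta>\<^sub>u y = \<Squnion>{x. \<alpha>\<^sub>u x \<le> y}\<close>, and commutation with the \<open>f\<^bsub>v,u\<^esub>\<close> is exactly what makes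
\<open>\<beta>\<close> natural. Conversely a natural fibrewise right adjoint turns upper bounds of \<open>\<alpha>\<^sub>* S\<close> into
upper bounds of \<open>S\<close>, so \<open>\<alpha>\<close> preserves all sups.\<close>

lemma posheaf_sheaf: "is_posheaf F \<Longrightarrow> is_sheaf F"
  unfolding is_posheaf_def by (rule conjunct1)

lemma posheaf_res_in_sec: "is_posheaf F \<Longrightarrow> v \<le> u \<Longrightarrow> x \<in> sec F u \<Longrightarrow> res F u v x \<in> sec F v"
  by (drule posheaf_sheaf, unfold is_sheaf_def, drule conjunct1) blast

lemma posheaf_res_id: "is_posheaf F \<Longrightarrow> x \<in> sec F u \<Longrightarrow> res F u u x = x"
  by (drule posheaf_sheaf, unfold is_sheaf_def, drule conjunct2, drule conjunct1) blast

lemma posheaf_res_res: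
  "is_posheaf F \<Longrightarrow> w \<le> v \<Longrightarrow> v \<le> u \<Longrightarrow> x \<in> sec F u \<Longrightarrow> res F v w (res F u v x) = res F u w x"
  by (drule posheaf_sheaf, unfold is_sheaf_def, drule conjunct2, drule conjunct2, drule conjunct1) blast

lemma posheaf_partial_order:
  "is_posheaf F \<Longrightarrow> (\<forall>x\<in>sec F u. ord F u x x) \<and>
    (\<forall>x\<in>sec F u. \<forall>y\<in>sec F u. ord F u x y \<longrightarrow> ord F u y x \<longrightarrow> x = y) \<and>
    (\<forall>x\<in>sec F u. \<forall>y\<in>sec F u. \<forall>z\<in>sec F u. ord F u x y \<longrightarrow> ord F u y z \<longrightarrow> ord F u x z)"
  unfolding is_posheaf_def by (drule conjunct2, drule conjunct1) (erule spec)

lemma posheaf_ord_refl: "is_posheaf F \<Longrightarrow> x \<in> sec F u \<Longrightarrow> ord F u x x"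
  by (drule posheaf_partial_order) blast

lemma posheaf_ord_antisym:
  "is_posheaf F \<Longrightarrow> x \<in> sec F u \<Longrightarrow> y \<in> sec F u \<Longrightarrow> ord F u x y \<Longrightarrow> ord F u y x \<Longrightarrow> x = y"
  by (drule posheaf_partial_order) blast

lemma posheaf_ord_trans:
  "is_posheaf F \<Longrightarrow> x \<in> sec F u \<Longrightarrow> y \<in> sec F u \<Longrightarrow> z \<in> sec F u \<Longrightarrow>
    ord F u x y \<Longrightarrow> ord F u y z \<Longrightarrow> ord F u x z"
  by (drule posheaf_partial_order) blast

lemma posheaf_res_mono:
  "is_posheaf F \<Longrightarrow> v \<le> u \<Longrightarrow> x \<in> sec F u \<Longrightarrow> y \<in> sec F u \<Longrightarrow> ord F u x y \<Longrightarrow>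
    ord F v (res F u v x) (res F u v y)"
  unfolding is_posheaf_def by (drule conjunct2, drule conjunct2, drule conjunct1) blast

lemma posheaf_ord_glue:
  "is_posheaf F \<Longrightarrow> s \<in> sec F (Sup U) \<Longrightarrow> t \<in> sec F (Sup U) \<Longrightarrow>
    (\<And>w. w \<in> U \<Longrightarrow> ord F w (res F (Sup U) w s) (res F (Sup U) w t)) \<Longrightarrow> ord F (Sup U) s t"
  unfolding is_posheaf_def by (drule conjunct2, drule conjunct2, drule conjunct2) blast

lemma posheaf_eq_by_lower_bounds:
  assumes "is_posheaf F" "a \<in> sec F u" "b \<in> sec F u"
    and "\<And>x. x \<in> sec F u \<Longrightarrow> ord F u x a \<longleftrightarrow> ord F u x b"
  shows "a = b"
  using posheaf_ord_antisym[OF assms(1-3)] assms(2-4) posheaf_ord_refl[OF assms(1)] by blast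

lemma complete_posheaf_posheaf: "complete_posheaf F \<Longrightarrow> is_posheaf F"
  unfolding complete_posheaf_def by blast

lemma complete_posheaf_lub_exists: "complete_posheaf F \<Longrightarrow> A \<subseteq> sec F u \<Longrightarrow> \<exists>z. is_lub F u A z"
  unfolding complete_posheaf_def by blast

lemma complete_posheaf_left_adj_exists:
  "complete_posheaf F \<Longrightarrow> v \<le> u \<Longrightarrow> \<exists>f. is_left_adj_res F u v f"
  unfolding complete_posheaf_def by blast

lemma is_lub_in_sec: "is_lub F u A z \<Longrightarrow> z \<in> sec F u"
  unfolding is_lub_def by blast

lemma is_lub_le_iff:
  "is_posheaf F \<Longrightarrow> is_lub F u A z \<Longrightarrow> A \<subseteq> sec F u \<Longrightarrow> x \<in> sec F u \<Longrightarrow>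
    ord F u z x \<longleftrightarrow> (\<forall>a\<in>A. ord F u a x)"
  unfolding is_lub_def using posheaf_ord_trans[where F = F and u = u and y = z and z = x] by blast

lemma res_ladj_galois:
  assumes "complete_posheaf F" "v \<le> u" "y \<in> sec F v"
  shows "res_ladj F v u y \<in> sec F u"
    and "x \<in> sec F u \<Longrightarrow> ord F u (res_ladj F v u y) x \<longleftrightarrow> ord F v y (res F u v x)"
proof -
  obtain f where f: "is_left_adj_res F u v f"
    using complete_posheaf_left_adj_exists assms(1,2) by blast
  have f_y: "f y \<in> sec F u" "\<forall>x\<in>sec F u. ord F u (f y) x \<longleftrightarrow> ord F v y (res F u v x)"
    using f assms(3) unfolding is_left_adj_res_def by auto
  have "res_ladj F v u y = f y"
    unfolding res_ladj_def
  proof (rule the_equality)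
    fix x assume x: "x \<in> sec F u \<and> (\<forall>x'\<in>sec F u. ord F u x x' \<longleftrightarrow> ord F v y (res F u v x'))"
    show "x = f y"
      using posheaf_ord_antisym[OF complete_posheaf_posheaf[OF assms(1)]]
        posheaf_ord_refl[OF complete_posheaf_posheaf[OF assms(1)]] x f_y by blast
  qed (use f_y in blast)
  with f_y show "res_ladj F v u y \<in> sec F u"
    and "x \<in> sec F u \<Longrightarrow> ord F u (res_ladj F v u y) x \<longleftrightarrow> ord F v y (res F u v x)"
    by simp_all
qed

lemma morphism_in_sec: "is_morphism F G \<alpha> \<Longrightarrow> x \<in> sec F u \<Longrightarrow> \<alpha> u x \<in> sec G u"
  unfolding is_morphism_def by blast

lemma morphism_res:
  "is_morphism F G \<alpha> \<Longrightarrow> v \<le> u \<Longrightarrow> x \<in> sec F u \<Longrightarrow> \<alpha> v (res F u v x) = res G u v (\<alpha> u x)"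
  unfolding is_morphism_def by blast

lemma order_preserving_ord_mono:
  assumes "is_posheaf F" "is_posheaf G" "is_morphism F G \<alpha>" "order_preserving F G \<alpha>"
    and "x \<in> sec F u" "y \<in> sec F u" "ord F u x y"
  shows "ord G u (\<alpha> u x) (\<alpha> u y)"
proof -
  have "pt_le F u x u y"
    unfolding pt_le_def using assms(7) posheaf_res_id[OF assms(1,6)] by simp
  then have "pt_le G u (\<alpha> u x) u (\<alpha> u y)"
    using assms(4,5,6) unfolding order_preserving_def by blast
  then show ?thesis
    unfolding pt_le_def using posheaf_res_id[OF assms(2) morphism_in_sec[OF assms(3,6)]] by simp
qed

definition upper_bound :: "('o::complete_lattice, 'a, 'c) posheaf_scheme \<Rightarrow> 'o \<Rightarrow> ('o \<Rightarrow> 'a set) \<Rightarrow> 'a \<Rightarrow> bool"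
  where "upper_bound F u P z \<longleftrightarrow> (\<forall>v. v \<le> u \<longrightarrow> (\<forall>y\<in>P v. ord F v y (res F u v z)))"

definition is_sup :: "('o::complete_lattice, 'a, 'c) posheaf_scheme \<Rightarrow> 'o \<Rightarrow> ('o \<Rightarrow> 'a set) \<Rightarrow> 'a \<Rightarrow> bool"
  where "is_sup F u P z \<longleftrightarrow> z \<in> sec F u \<and> (\<forall>x\<in>sec F u. ord F u z x \<longleftrightarrow> upper_bound F u P x)"

definition section_family :: "('o::complete_lattice, 'a, 'c) posheaf_scheme \<Rightarrow> 'o \<Rightarrow> ('o \<Rightarrow> 'a set) \<Rightarrow> bool"
  where "section_family F u P \<longleftrightarrow> (\<forall>v. \<not> v \<le> u \<longrightarrow> P v = {}) \<and> (\<forall>v. v \<le> u \<longrightarrow> P v \<subseteq> sec F v)"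

definition at_open :: "'o \<Rightarrow> 'a set \<Rightarrow> 'o \<Rightarrow> 'a set"
  where "at_open v A = (\<lambda>w. if w = v then A else {})"

lemma psup_eqI:
  assumes F: "is_posheaf F" and z: "is_sup F u S z"
  shows "psup F u S = z"
  unfolding psup_def upper_bound_def[symmetric]
proof (rule the_equality)
  show "z \<in> sec F u \<and> upper_bound F u S z \<and> (\<forall>z'\<in>sec F u. upper_bound F u S z' \<longrightarrow> ord F u z z')"
    using z posheaf_ord_refl[OF F] unfolding is_sup_def by blast
next
  fix z' assume z': "z' \<in> sec F u \<and> upper_bound F u S z' \<and>
    (\<forall>z''\<in>sec F u. upper_bound F u S z'' \<longrightarrow> ord F u z' z'')"
  then show "z' = z"
    using z posheaf_ord_antisym[OF F] posheaf_ord_refl[OF F] unfolding is_sup_def by blast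
qed

lemma is_sup_exists:
  assumes cF: "complete_posheaf F" and P: "\<forall>v. v \<le> u \<longrightarrow> P v \<subseteq> sec F v"
  shows "\<exists>z. is_sup F u P z"
proof -
  define E where "E = {res_ladj F w u y | w y. w \<le> u \<and> y \<in> P w}"
  have E: "E \<subseteq> sec F u"
    unfolding E_def using res_ladj_galois(1)[OF cF] P by blast
  obtain z where z: "is_lub F u E z"
    using complete_posheaf_lub_exists[OF cF E] by blast
  have "ord F u z x \<longleftrightarrow> upper_bound F u P x" if x: "x \<in> sec F u" for x
  proof -
    have "ord F u z x \<longleftrightarrow> (\<forall>e\<in>E. ord F u e x)"
      by (rule is_lub_le_iff[OF complete_posheaf_posheaf[OF cF] z E x])
    also have "\<dots> \<longleftrightarrow> upper_bound F u P x"
      unfolding E_def upper_bound_def using res_ladj_galois(2)[OF cF] P x by blast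
    finally show ?thesis .
  qed
  then show ?thesis
    using is_lub_in_sec[OF z] unfolding is_sup_def by blast
qed

lemma upper_bound_at_open:
  "upper_bound F u (at_open v A) x \<longleftrightarrow> (v \<le> u \<longrightarrow> (\<forall>y\<in>A. ord F v y (res F u v x)))"
  unfolding upper_bound_def at_open_def by auto

lemma image_at_open: "(\<lambda>w. \<alpha> w ` at_open v A w) = at_open v (\<alpha> v ` A)"
  unfolding at_open_def by (rule ext) simp

lemma section_family_at_open: "v \<le> u \<Longrightarrow> A \<subseteq> sec F v \<Longrightarrow> section_family F u (at_open v A)"
  unfolding section_family_def at_open_def by auto

lemma is_sup_at_open_lub:
  assumes F: "is_posheaf F" and A: "A \<subseteq> sec F u" and z: "is_lub F u A z"
  shows "is_sup F u (at_open u A) z"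
  unfolding is_sup_def upper_bound_at_open
  using is_lub_le_iff[OF F z A] is_lub_in_sec[OF z] posheaf_res_id[OF F] by simp

lemma is_sup_res_ladj:
  assumes "complete_posheaf F" "v \<le> u" "y \<in> sec F v"
  shows "is_sup F u (at_open v {y}) (res_ladj F v u y)"
  unfolding is_sup_def upper_bound_at_open using res_ladj_galois[OF assms] assms(2) by simp

lemma section_family_subsheaf: "is_subsheaf F u S \<Longrightarrow> section_family F u S"
  unfolding is_subsheaf_def section_family_def by blast

lemma section_family_image:
  "is_morphism F G \<alpha> \<Longrightarrow> section_family F u P \<Longrightarrow> section_family G u (\<lambda>v. \<alpha> v ` P v)"
  unfolding section_family_def by (auto intro: morphism_in_sec)

lemma is_subsheaf_sec: "is_posheaf F \<Longrightarrow> is_subsheaf F u (\<lambda>v. if v \<le> u then sec F v else {})"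
  unfolding is_subsheaf_def by (auto intro: posheaf_res_in_sec order_trans)

lemma subsheaf_empty: "is_subsheaf F u T \<Longrightarrow> \<not> v \<le> u \<Longrightarrow> T v = {}"
  unfolding is_subsheaf_def by blast

lemma subsheaf_in_sec: "is_subsheaf F u T \<Longrightarrow> v \<le> u \<Longrightarrow> x \<in> T v \<Longrightarrow> x \<in> sec F v"
  unfolding is_subsheaf_def by blast

lemma subsheaf_res:
  "is_subsheaf F u T \<Longrightarrow> v \<le> u \<Longrightarrow> w \<le> v \<Longrightarrow> x \<in> T v \<Longrightarrow> res F v w x \<in> T w"
  unfolding is_subsheaf_def by blast

lemma subsheaf_glue:
  "is_subsheaf F u T \<Longrightarrow> Sup V \<le> u \<Longrightarrow> x \<in> sec F (Sup V) \<Longrightarrow>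
    (\<And>w. w \<in> V \<Longrightarrow> res F (Sup V) w x \<in> T w) \<Longrightarrow> x \<in> T (Sup V)"
  unfolding is_subsheaf_def by blast

lemma is_subsheaf_Inter:
  assumes Q: "Q T\<^sub>0" and sub: "\<And>T. Q T \<Longrightarrow> is_subsheaf F u T"
  shows "is_subsheaf F u (\<lambda>v. \<Inter>{T v | T. Q T})"
proof -
  have mem: "x \<in> \<Inter>{T v | T. Q T} \<longleftrightarrow> (\<forall>T. Q T \<longrightarrow> x \<in> T v)" for x v
    by blast
  show ?thesis
    unfolding is_subsheaf_def
  proof (intro conjI allI impI subsetI)
    fix v assume "\<not> v \<le> u"
    then show "\<Inter>{T v | T. Q T} = {}"
      using subsheaf_empty[OF sub[OF Q]] Q mem by blast
  next
    fix v x assume "v \<le> u" "x \<in> \<Inter>{T v | T. Q T}"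
    then show "x \<in> sec F v"
      using subsheaf_in_sec[OF sub[OF Q]] Q mem by blast
  next
    fix v w x assume "v \<le> u" "w \<le> v" "x \<in> \<Inter>{T v | T. Q T}"
    then show "res F v w x \<in> \<Inter>{T w | T. Q T}"
      unfolding mem using subsheaf_res[OF sub] by blast
  next
    fix V x assume "Sup V \<le> u" "x \<in> sec F (Sup V)"
      "\<forall>w\<in>V. res F (Sup V) w x \<in> \<Inter>{T w | T. Q T}"
    then show "x \<in> \<Inter>{T (Sup V) | T. Q T}"
      unfolding mem using subsheaf_glue[OF sub] by blast
  qed
qed

lemma gen_subsheaf_superset: "P v \<subseteq> gen_subsheaf F u P v"
  unfolding gen_subsheaf_def by blast

lemma gen_subsheaf_least: "is_subsheaf F u T \<Longrightarrow> (\<And>w. P w \<subseteq> T w) \<Longrightarrow> gen_subsheaf F u P v \<subseteq> T v"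
  unfolding gen_subsheaf_def by blast

lemma is_subsheaf_gen_subsheaf:
  assumes F: "is_posheaf F" and P: "section_family F u P"
  shows "is_subsheaf F u (gen_subsheaf F u P)"
  unfolding gen_subsheaf_def
proof (rule is_subsheaf_Inter)
  show "is_subsheaf F u (\<lambda>v. if v \<le> u then sec F v else {}) \<and>
    (\<forall>w. P w \<subseteq> (if w \<le> u then sec F w else {}))"
    using is_subsheaf_sec[OF F] P unfolding section_family_def by auto
qed simp

lemma is_subsheaf_below:
  assumes F: "is_posheaf F" and G: "is_posheaf G" and \<alpha>: "is_morphism F G \<alpha>" and z: "z \<in> sec G u"
  shows "is_subsheaf F u (\<lambda>v. if v \<le> u then {x \<in> sec F v. ord G v (\<alpha> v x) (res G u v z)} else {})"
    (is "is_subsheaf F u ?T")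
  unfolding is_subsheaf_def
proof (intro conjI allI impI subsetI)
  fix v w x assume vu: "v \<le> u" and wv: "w \<le> v" and "x \<in> ?T v"
  then have x: "x \<in> sec F v" "ord G v (\<alpha> v x) (res G u v z)" by auto
  have "ord G w (res G v w (\<alpha> v x)) (res G v w (res G u v z))"
    using posheaf_res_mono[OF G wv morphism_in_sec[OF \<alpha> x(1)] posheaf_res_in_sec[OF G vu z] x(2)] .
  then have "ord G w (\<alpha> w (res F v w x)) (res G u w z)"
    using morphism_res[OF \<alpha> wv x(1)] posheaf_res_res[OF G wv vu z] by simp
  then show "res F v w x \<in> ?T w"
    using order_trans[OF wv vu] posheaf_res_in_sec[OF F wv x(1)] by simp
next
  fix V x assume Vu: "Sup V \<le> u" and x: "x \<in> sec F (Sup V)" and "\<forall>w\<in>V. res F (Sup V) w x \<in> ?T w"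
  then have below: "ord G w (\<alpha> w (res F (Sup V) w x)) (res G u w z)" if "w \<in> V" for w
    using that order_trans[OF Sup_upper Vu] by auto
  have "ord G (Sup V) (\<alpha> (Sup V) x) (res G u (Sup V) z)"
  proof (rule posheaf_ord_glue[OF G morphism_in_sec[OF \<alpha> x] posheaf_res_in_sec[OF G Vu z]])
    fix w assume w: "w \<in> V"
    then have wV: "w \<le> Sup V" by (rule Sup_upper)
    show "ord G w (res G (Sup V) w (\<alpha> (Sup V) x)) (res G (Sup V) w (res G u (Sup V) z))"
      using below[OF w] morphism_res[OF \<alpha> wV x] posheaf_res_res[OF G wV Vu z] by simp
  qed
  then show "x \<in> ?T (Sup V)" using Vu x by simp
qed auto

lemma upper_bound_antimono: "(\<And>v. P v \<subseteq> Q v) \<Longrightarrow> upper_bound F u Q z \<Longrightarrow> upper_bound F u P z"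
  unfolding upper_bound_def by blast

lemma upper_bound_image_gen_subsheaf:
  assumes F: "is_posheaf F" and G: "is_posheaf G" and \<alpha>: "is_morphism F G \<alpha>"
    and P: "section_family F u P" and z: "z \<in> sec G u"
  shows "upper_bound G u (\<lambda>v. \<alpha> v ` gen_subsheaf F u P v) z \<longleftrightarrow> upper_bound G u (\<lambda>v. \<alpha> v ` P v) z"
proof
  assume "upper_bound G u (\<lambda>v. \<alpha> v ` gen_subsheaf F u P v) z"
  then show "upper_bound G u (\<lambda>v. \<alpha> v ` P v) z"
    by (rule upper_bound_antimono[OF image_mono[OF gen_subsheaf_superset]])
next
  assume ub: "upper_bound G u (\<lambda>v. \<alpha> v ` P v) z"
  let ?T = "\<lambda>v. if v \<le> u then {x \<in> sec F v. ord G v (\<alpha> v x) (res G u v z)} else {}"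
  have "P w \<subseteq> ?T w" for w
  proof
    fix x assume x: "x \<in> P w"
    then have "w \<le> u" and "x \<in> sec F w"
      using P unfolding section_family_def by auto
    moreover have "ord G w (\<alpha> w x) (res G u w z)"
      using ub \<open>w \<le> u\<close> x unfolding upper_bound_def by blast
    ultimately show "x \<in> ?T w" by simp
  qed
  then have "gen_subsheaf F u P v \<subseteq> ?T v" for v
    by (rule gen_subsheaf_least[OF is_subsheaf_below[OF F G \<alpha> z]])
  moreover have "upper_bound G u (\<lambda>v. \<alpha> v ` ?T v) z"
    unfolding upper_bound_def by auto
  ultimately show "upper_bound G u (\<lambda>v. \<alpha> v ` gen_subsheaf F u P v) z"
    by (rule upper_bound_antimono[OF image_mono])
qed

lemma is_morphism_id: "is_posheaf F \<Longrightarrow> is_morphism F F (\<lambda>v x. x)"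
  unfolding is_morphism_def by (auto intro: posheaf_res_in_sec)

lemma is_sup_cong:
  "(\<And>x. x \<in> sec F u \<Longrightarrow> upper_bound F u P x \<longleftrightarrow> upper_bound F u Q x) \<Longrightarrow> is_sup F u P z \<longleftrightarrow> is_sup F u Q z"
  unfolding is_sup_def by auto

lemma is_sup_image_gen_subsheaf:
  assumes "is_posheaf F" "is_posheaf G" "is_morphism F G \<alpha>" "section_family F u P"
  shows "is_sup G u (\<lambda>v. \<alpha> v ` gen_subsheaf F u P v) m \<longleftrightarrow> is_sup G u (\<lambda>v. \<alpha> v ` P v) m"
  using upper_bound_image_gen_subsheaf[OF assms] by (rule is_sup_cong)

lemma is_sup_gen_subsheaf:
  assumes F: "is_posheaf F" and P: "section_family F u P"
  shows "is_sup F u (gen_subsheaf F u P) z \<longleftrightarrow> is_sup F u P z"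
  using is_sup_image_gen_subsheaf[OF F F is_morphism_id[OF F] P] by simp

lemma is_sup_push:
  assumes G: "is_posheaf G" and \<alpha>: "is_morphism F G \<alpha>" and S: "section_family F u S"
  shows "is_sup G u (push G \<alpha> u S) m \<longleftrightarrow> is_sup G u (\<lambda>v. \<alpha> v ` S v) m"
  unfolding push_def by (rule is_sup_gen_subsheaf[OF G section_family_image[OF \<alpha> S]])

definition sup_preserving :: "('o::complete_lattice, 'a, 'c) posheaf_scheme \<Rightarrow> ('o, 'b, 'd) posheaf_scheme \<Rightarrow>
    ('o \<Rightarrow> 'a \<Rightarrow> 'b) \<Rightarrow> bool"
  where "sup_preserving F G \<alpha> \<longleftrightarrow>
    (\<forall>u S. is_subsheaf F u S \<longrightarrow> psup G u (push G \<alpha> u S) = \<alpha> u (psup F u S))"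

definition fibre_join_preserving :: "('o::complete_lattice, 'a, 'c) posheaf_scheme \<Rightarrow> ('o, 'b, 'd) posheaf_scheme \<Rightarrow>
    ('o \<Rightarrow> 'a \<Rightarrow> 'b) \<Rightarrow> bool"
  where "fibre_join_preserving F G \<alpha> \<longleftrightarrow>
    (\<forall>u. \<forall>A \<subseteq> sec F u. \<forall>z. is_lub F u A z \<longrightarrow> is_lub G u (\<alpha> u ` A) (\<alpha> u z))"

definition commutes_with_res_ladj :: "('o::complete_lattice, 'a, 'c) posheaf_scheme \<Rightarrow> ('o, 'b, 'd) posheaf_scheme \<Rightarrow>
    ('o \<Rightarrow> 'a \<Rightarrow> 'b) \<Rightarrow> bool"
  where "commutes_with_res_ladj F G \<alpha> \<longleftrightarrow>
    (\<forall>u v. v \<le> u \<longrightarrow> (\<forall>y\<in>sec F v. \<alpha> u (res_ladj F v u y) = res_ladj G v u (\<alpha> v y)))"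

definition fibre_adjoint :: "('o::complete_lattice, 'a, 'c) posheaf_scheme \<Rightarrow> ('o, 'b, 'd) posheaf_scheme \<Rightarrow>
    ('o \<Rightarrow> 'a \<Rightarrow> 'b) \<Rightarrow> ('o \<Rightarrow> 'b \<Rightarrow> 'a) \<Rightarrow> bool"
  where "fibre_adjoint F G \<alpha> \<beta> \<longleftrightarrow>
    (\<forall>u x y. x \<in> sec F u \<longrightarrow> y \<in> sec G u \<longrightarrow> (ord G u (\<alpha> u x) y \<longleftrightarrow> ord F u x (\<beta> u y)))"

lemma fibre_adjointD:
  "fibre_adjoint F G \<alpha> \<beta> \<Longrightarrow> x \<in> sec F u \<Longrightarrow> y \<in> sec G u \<Longrightarrow> ord G u (\<alpha> u x) y \<longleftrightarrow> ord F u x (\<beta> u y)"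
  unfolding fibre_adjoint_def by blast

lemma sup_preserving_is_sup:
  assumes F: "is_posheaf F" and G: "is_posheaf G" and \<alpha>: "is_morphism F G \<alpha>"
    and sup: "sup_preserving F G \<alpha>" and P: "section_family F u P"
    and z: "is_sup F u P z" and m: "is_sup G u (\<lambda>v. \<alpha> v ` P v) m"
  shows "\<alpha> u z = m"
proof -
  let ?S = "gen_subsheaf F u P"
  have S: "is_subsheaf F u ?S"
    by (rule is_subsheaf_gen_subsheaf[OF F P])
  have "psup F u ?S = z"
    using z is_sup_gen_subsheaf[OF F P] psup_eqI[OF F] by blast
  moreover have "psup G u (push G \<alpha> u ?S) = m"
    using m is_sup_push[OF G \<alpha> section_family_subsheaf[OF S]] is_sup_image_gen_subsheaf[OF F G \<alpha> P]
      psup_eqI[OF G] by blast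
  ultimately show ?thesis
    using sup S unfolding sup_preserving_def by metis
qed

lemma sup_preserving_fibre_join_preserving:
  assumes F: "is_posheaf F" and cG: "complete_posheaf G" and \<alpha>: "is_morphism F G \<alpha>"
    and sup: "sup_preserving F G \<alpha>"
  shows "fibre_join_preserving F G \<alpha>"
  unfolding fibre_join_preserving_def
proof (intro allI impI)
  fix u A z assume A: "A \<subseteq> sec F u" and z: "is_lub F u A z"
  have \<alpha>A: "\<alpha> u ` A \<subseteq> sec G u"
    using A morphism_in_sec[OF \<alpha>] by blast
  obtain m where m: "is_lub G u (\<alpha> u ` A) m"
    using complete_posheaf_lub_exists[OF cG \<alpha>A] by blast
  have "\<alpha> u z = m"
    using sup_preserving_is_sup[OF F complete_posheaf_posheaf[OF cG] \<alpha> sup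
        section_family_at_open[OF order_refl A] is_sup_at_open_lub[OF F A z]]
      is_sup_at_open_lub[OF complete_posheaf_posheaf[OF cG] \<alpha>A m]
    unfolding image_at_open by blast
  with m show "is_lub G u (\<alpha> u ` A) (\<alpha> u z)" by simp
qed

lemma sup_preserving_commutes_with_res_ladj:
  assumes cF: "complete_posheaf F" and cG: "complete_posheaf G" and \<alpha>: "is_morphism F G \<alpha>"
    and sup: "sup_preserving F G \<alpha>"
  shows "commutes_with_res_ladj F G \<alpha>"
  unfolding commutes_with_res_ladj_def
proof (intro allI impI ballI)
  fix u v y assume vu: "v \<le> u" and y: "y \<in> sec F v"
  show "\<alpha> u (res_ladj F v u y) = res_ladj G v u (\<alpha> v y)"
    using sup_preserving_is_sup[OF complete_posheaf_posheaf[OF cF] complete_posheaf_posheaf[OF cG] \<alpha> sup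
        section_family_at_open[OF vu] is_sup_res_ladj[OF cF vu y]]
      is_sup_res_ladj[OF cG vu morphism_in_sec[OF \<alpha> y]] y
    unfolding image_at_open by simp
qed

lemma adjoint_fibre_adjoint:
  assumes F: "is_posheaf F" and G: "is_posheaf G" and \<beta>: "is_morphism G F \<beta>" and adj: "adjoint F G \<alpha> \<beta>"
  shows "fibre_adjoint F G \<alpha> \<beta>"
  unfolding fibre_adjoint_def
proof (intro allI impI)
  fix u x y assume x: "x \<in> sec F u" and y: "y \<in> sec G u"
  have "pt_le G u (\<alpha> u x) u y \<longleftrightarrow> pt_le F u x u (\<beta> u y)"
    using adj x y unfolding adjoint_def by blast
  then show "ord G u (\<alpha> u x) y \<longleftrightarrow> ord F u x (\<beta> u y)"
    unfolding pt_le_def using posheaf_res_id[OF G y] posheaf_res_id[OF F morphism_in_sec[OF \<beta> y]] by simp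
qed

lemma fibre_adjoint_adjoint:
  assumes F: "is_posheaf F" and G: "is_posheaf G" and \<beta>: "is_morphism G F \<beta>" and adj: "fibre_adjoint F G \<alpha> \<beta>"
  shows "adjoint F G \<alpha> \<beta>"
  unfolding adjoint_def pt_le_def
proof (intro allI impI)
  fix u w x y assume x: "x \<in> sec F u" and y: "y \<in> sec G w"
  show "u \<le> w \<and> ord G u (\<alpha> u x) (res G w u y) \<longleftrightarrow> u \<le> w \<and> ord F u x (res F w u (\<beta> w y))"
    using fibre_adjointD[OF adj x posheaf_res_in_sec[OF G _ y]] morphism_res[OF \<beta> _ y] by auto
qed

lemma upper_bound_image_fibre_adjoint:
  assumes G: "is_posheaf G" and \<beta>: "is_morphism G F \<beta>" and adj: "fibre_adjoint F G \<alpha> \<beta>"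
    and S: "section_family F u S" and z: "z \<in> sec G u"
  shows "upper_bound G u (\<lambda>v. \<alpha> v ` S v) z \<longleftrightarrow> upper_bound F u S (\<beta> u z)"
proof -
  have "ord G v (\<alpha> v x) (res G u v z) \<longleftrightarrow> ord F v x (res F u v (\<beta> u z))"
    if vu: "v \<le> u" and x: "x \<in> S v" for v x
  proof -
    have "x \<in> sec F v"
      using S vu x unfolding section_family_def by blast
    then show ?thesis
      using fibre_adjointD[OF adj _ posheaf_res_in_sec[OF G vu z]] morphism_res[OF \<beta> vu z] by simp
  qed
  then show ?thesis
    unfolding upper_bound_def by auto
qed

lemma is_sup_image_fibre_adjoint:
  assumes G: "is_posheaf G" and \<alpha>: "is_morphism F G \<alpha>" and \<beta>: "is_morphism G F \<beta>"
    and adj: "fibre_adjoint F G \<alpha> \<beta>" and S: "section_family F u S" and x: "is_sup F u S x"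
  shows "is_sup G u (\<lambda>v. \<alpha> v ` S v) (\<alpha> u x)"
  unfolding is_sup_def
proof (intro conjI ballI)
  have x_sec: "x \<in> sec F u"
    using x unfolding is_sup_def by blast
  then show "\<alpha> u x \<in> sec G u"
    by (rule morphism_in_sec[OF \<alpha>])
  fix z assume z: "z \<in> sec G u"
  have "ord G u (\<alpha> u x) z \<longleftrightarrow> ord F u x (\<beta> u z)"
    by (rule fibre_adjointD[OF adj x_sec z])
  also have "\<dots> \<longleftrightarrow> upper_bound F u S (\<beta> u z)"
    using x morphism_in_sec[OF \<beta> z] unfolding is_sup_def by blast
  also have "\<dots> \<longleftrightarrow> upper_bound G u (\<lambda>v. \<alpha> v ` S v) z"
    using upper_bound_image_fibre_adjoint[OF G \<beta> adj S z] by simp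
  finally show "ord G u (\<alpha> u x) z \<longleftrightarrow> upper_bound G u (\<lambda>v. \<alpha> v ` S v) z" .
qed

lemma fibre_adjoint_sup_preserving:
  assumes cF: "complete_posheaf F" and G: "is_posheaf G" and \<alpha>: "is_morphism F G \<alpha>"
    and \<beta>: "is_morphism G F \<beta>" and adj: "fibre_adjoint F G \<alpha> \<beta>"
  shows "sup_preserving F G \<alpha>"
  unfolding sup_preserving_def
proof (intro allI impI)
  fix u S assume "is_subsheaf F u S"
  then have S: "section_family F u S"
    by (rule section_family_subsheaf)
  obtain x where x: "is_sup F u S x"
    using is_sup_exists[OF cF] S unfolding section_family_def by blast
  have "psup G u (push G \<alpha> u S) = \<alpha> u x"
    using is_sup_image_fibre_adjoint[OF G \<alpha> \<beta> adj S x] is_sup_push[OF G \<alpha> S] psup_eqI[OF G] by blast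
  with psup_eqI[OF complete_posheaf_posheaf[OF cF] x]
  show "psup G u (push G \<alpha> u S) = \<alpha> u (psup F u S)" by simp
qed

lemma fibre_join_preserving_fibre_adjoint:
  assumes cF: "complete_posheaf F" and G: "is_posheaf G" and \<alpha>: "is_morphism F G \<alpha>"
    and mono: "order_preserving F G \<alpha>" and join: "fibre_join_preserving F G \<alpha>"
  obtains \<beta> where "\<And>u y. y \<in> sec G u \<Longrightarrow> \<beta> u y \<in> sec F u" and "fibre_adjoint F G \<alpha> \<beta>"
proof
  have F: "is_posheaf F"
    using cF by (rule complete_posheaf_posheaf)
  define B where "B u y = {x \<in> sec F u. ord G u (\<alpha> u x) y}" for u y
  define \<beta> where "\<beta> u y = (SOME z. is_lub F u (B u y) z)" for u y
  have B: "B u y \<subseteq> sec F u" for u y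
    unfolding B_def by blast
  have \<beta>_lub: "is_lub F u (B u y) (\<beta> u y)" for u y
    unfolding \<beta>_def by (rule someI_ex[OF complete_posheaf_lub_exists[OF cF B]])
  then show \<beta>_sec: "\<beta> u y \<in> sec F u" for u y
    by (rule is_lub_in_sec)
  show "fibre_adjoint F G \<alpha> \<beta>"
    unfolding fibre_adjoint_def
  proof (intro allI impI iffI)
    fix u x y assume x: "x \<in> sec F u" and "ord G u (\<alpha> u x) y"
    then have "x \<in> B u y"
      unfolding B_def by blast
    then show "ord F u x (\<beta> u y)"
      using \<beta>_lub unfolding is_lub_def by blast
  next
    fix u x y assume x: "x \<in> sec F u" and y: "y \<in> sec G u" and x_le: "ord F u x (\<beta> u y)"
    have "is_lub G u (\<alpha> u ` B u y) (\<alpha> u (\<beta> u y))"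
      using join B[of u y] \<beta>_lub[of u y] unfolding fibre_join_preserving_def by blast
    moreover have "ord G u a y" if "a \<in> \<alpha> u ` B u y" for a
      using that unfolding B_def by blast
    ultimately have "ord G u (\<alpha> u (\<beta> u y)) y"
      using y unfolding is_lub_def by blast
    moreover have "ord G u (\<alpha> u x) (\<alpha> u (\<beta> u y))"
      by (rule order_preserving_ord_mono[OF F G \<alpha> mono x \<beta>_sec x_le])
    ultimately show "ord G u (\<alpha> u x) y"
      using posheaf_ord_trans[OF G morphism_in_sec[OF \<alpha> x] morphism_in_sec[OF \<alpha> \<beta>_sec] y] by blast
  qed
qed

lemma fibre_adjoint_morphism:
  assumes cF: "complete_posheaf F" and cG: "complete_posheaf G" and \<alpha>: "is_morphism F G \<alpha>"
    and comm: "commutes_with_res_ladj F G \<alpha>"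
    and \<beta>_sec: "\<And>u y. y \<in> sec G u \<Longrightarrow> \<beta> u y \<in> sec F u" and adj: "fibre_adjoint F G \<alpha> \<beta>"
  shows "is_morphism G F \<beta>"
  unfolding is_morphism_def
proof (intro conjI allI impI)
  have F: "is_posheaf F" and G: "is_posheaf G"
    using cF cG by (auto intro: complete_posheaf_posheaf)
  fix u v y assume vu: "v \<le> u" and y: "y \<in> sec G u"
  show "\<beta> v (res G u v y) = res F u v (\<beta> u y)"
  proof (rule posheaf_eq_by_lower_bounds[OF F \<beta>_sec[OF posheaf_res_in_sec[OF G vu y]]
        posheaf_res_in_sec[OF F vu \<beta>_sec[OF y]]])
    fix x assume x: "x \<in> sec F v"
    have \<alpha>x: "\<alpha> v x \<in> sec G v"
      by (rule morphism_in_sec[OF \<alpha> x])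
    have "ord F v x (\<beta> v (res G u v y)) \<longleftrightarrow> ord G v (\<alpha> v x) (res G u v y)"
      using fibre_adjointD[OF adj x posheaf_res_in_sec[OF G vu y]] by simp
    also have "\<dots> \<longleftrightarrow> ord G u (res_ladj G v u (\<alpha> v x)) y"
      using res_ladj_galois(2)[OF cG vu \<alpha>x y] by simp
    also have "\<dots> \<longleftrightarrow> ord G u (\<alpha> u (res_ladj F v u x)) y"
      using comm vu x unfolding commutes_with_res_ladj_def by simp
    also have "\<dots> \<longleftrightarrow> ord F u (res_ladj F v u x) (\<beta> u y)"
      by (rule fibre_adjointD[OF adj res_ladj_galois(1)[OF cF vu x] y])
    also have "\<dots> \<longleftrightarrow> ord F v x (res F u v (\<beta> u y))"
      by (rule res_ladj_galois(2)[OF cF vu x \<beta>_sec[OF y]])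
    finally show "ord F v x (\<beta> v (res G u v y)) \<longleftrightarrow> ord F v x (res F u v (\<beta> u y))" .
  qed
qed (rule \<beta>_sec)

lemma fibre_adjoint_order_preserving:
  assumes F: "is_posheaf F" and G: "is_posheaf G" and \<alpha>: "is_morphism F G \<alpha>"
    and \<beta>: "is_morphism G F \<beta>" and adj: "fibre_adjoint F G \<alpha> \<beta>"
  shows "order_preserving G F \<beta>"
  unfolding order_preserving_def pt_le_def
proof (intro allI impI conjI)
  fix u w y y' assume y: "y \<in> sec G u" and y': "y' \<in> sec G w"
    and le: "u \<le> w \<and> ord G u y (res G w u y')"
  then have uw: "u \<le> w" and y'_u: "res G w u y' \<in> sec G u"
    using posheaf_res_in_sec[OF G _ y'] by auto
  have \<beta>y: "\<beta> u y \<in> sec F u"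
    by (rule morphism_in_sec[OF \<beta> y])
  have "ord G u (\<alpha> u (\<beta> u y)) y"
    using fibre_adjointD[OF adj \<beta>y y] posheaf_ord_refl[OF F \<beta>y] by blast
  then have "ord G u (\<alpha> u (\<beta> u y)) (res G w u y')"
    using posheaf_ord_trans[OF G morphism_in_sec[OF \<alpha> \<beta>y] y y'_u] le by blast
  then show "ord F u (\<beta> u y) (res F w u (\<beta> w y'))"
    using fibre_adjointD[OF adj \<beta>y y'_u] morphism_res[OF \<beta> uw y'] by simp
  show "u \<le> w" by (rule uw)
qed

lemma join_preserving_right_adjoint:
  assumes cF: "complete_posheaf F" and cG: "complete_posheaf G" and \<alpha>: "is_morphism F G \<alpha>"
    and mono: "order_preserving F G \<alpha>" and join: "fibre_join_preserving F G \<alpha>"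
    and comm: "commutes_with_res_ladj F G \<alpha>"
  shows "\<exists>\<beta>. is_morphism G F \<beta> \<and> order_preserving G F \<beta> \<and> adjoint F G \<alpha> \<beta>"
proof -
  have F: "is_posheaf F" and G: "is_posheaf G"
    using cF cG by (auto intro: complete_posheaf_posheaf)
  obtain \<beta> where \<beta>_sec: "\<And>u y. y \<in> sec G u \<Longrightarrow> \<beta> u y \<in> sec F u" and adj: "fibre_adjoint F G \<alpha> \<beta>"
    using fibre_join_preserving_fibre_adjoint[OF cF G \<alpha> mono join] by blast
  have \<beta>: "is_morphism G F \<beta>"
    by (rule fibre_adjoint_morphism[OF cF cG \<alpha> comm \<beta>_sec adj])
  show ?thesis
    using \<beta> fibre_adjoint_order_preserving[OF F G \<alpha> \<beta> adj] fibre_adjoint_adjoint[OF F G \<beta> adj] by blast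
qed

theorem proposition3p3:
  fixes F :: "('o::complete_lattice, 'a) posheaf"
    and G :: "('o, 'b) posheaf"
    and \<alpha> :: "'o \<Rightarrow> 'a \<Rightarrow> 'b"
  assumes "frame_law TYPE('o)"
    and "complete_posheaf F" and "complete_posheaf G"
    and "is_morphism F G \<alpha>" and "order_preserving F G \<alpha>"
  defines "cond1 \<equiv> (\<forall>u S. is_subsheaf F u S \<longrightarrow> psup G u (push G \<alpha> u S) = \<alpha> u (psup F u S))"
    and "cond2 \<equiv> (\<forall>u. \<forall>A \<subseteq> sec F u. \<forall>z. is_lub F u A z \<longrightarrow> is_lub G u (\<alpha> u ` A) (\<alpha> u z)) \<and>
                 (\<forall>u v. v \<le> u \<longrightarrow> (\<forall>y\<in>sec F v. \<alpha> u (res_ladj F v u y) = res_ladj G v u (\<alpha> v y)))"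
    and "cond3 \<equiv> (\<exists>\<beta>. is_morphism G F \<beta> \<and> order_preserving G F \<beta> \<and> adjoint F G \<alpha> \<beta>)"
  shows "(cond1 \<longleftrightarrow> cond2) \<and> (cond2 \<longleftrightarrow> cond3)"
proof -
  note cF = assms(2) and cG = assms(3) and \<alpha> = assms(4)
  have F: "is_posheaf F" and G: "is_posheaf G"
    using cF cG by (auto intro: complete_posheaf_posheaf)
  have cond1: "cond1 \<longleftrightarrow> sup_preserving F G \<alpha>"
    unfolding cond1_def sup_preserving_def ..
  have cond2: "cond2 \<longleftrightarrow> fibre_join_preserving F G \<alpha> \<and> commutes_with_res_ladj F G \<alpha>"
    unfolding cond2_def fibre_join_preserving_def commutes_with_res_ladj_def ..
  have "cond1 \<Longrightarrow> cond2"
    unfolding cond1 cond2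
    using sup_preserving_fibre_join_preserving[OF F cG \<alpha>] sup_preserving_commutes_with_res_ladj[OF cF cG \<alpha>]
    by blast
  moreover have "cond2 \<Longrightarrow> cond3"
    unfolding cond2 cond3_def using join_preserving_right_adjoint[OF cF cG \<alpha> assms(5)] by blast
  moreover have "cond3 \<Longrightarrow> cond1"
    unfolding cond3_def cond1
    using fibre_adjoint_sup_preserving[OF cF G \<alpha>] adjoint_fibre_adjoint[OF F G] by blast
  ultimately show ?thesis by blast
qed

end
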